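(* Let $G=(V,E)$ be an event graph. There exists a unique sink component $\mathcal C$ of $\mathrm{dec}(G)$ such that for every $v\in V$, $\mathcal C$ is the only sink component of $\mathrm{dec}(G)$ that is reachable (by a directed walk) from the node $(v,\emptyset)$.
   Context: An event graph is a finite, connected, undirected graph $G=(V,E)$, with $n=|V|$, in which every node $v$ carries a label that is either $\mathtt{i}x_v$ (insertion of $x_v$) or $\mathtt{d}x_v$ (deletion of $x_v$), where $x_v$ is an element of a finite universe $\mathcal U$. Write $\mathcal U_{|V}=\{x_v : v\in V\}$. It is assumed that for each $x\in\mathcal U_{|V}$ at least one node is labeled $\mathtt{i}x$ and at least one node is labeled $\mathtt{d}x$. The decorated graph $\mathrm{dec}(G)$ is the directed graph with vertex set $V\times 2^{\mathcal U_{|V}}$ in which $((u,X),(v,Y))$ is an edge if and only if $\{u,v\}\in E$ and $Y=X\cup\{x_v\}$ when $v$ is labeled $\mathtt{i}x_v$, respectively $Y=X\setminus\{x_v\}$ when $v$ is labeled $\mathtt{d}x_v$. A sink component of $\mathrm{dec}(G)$ is a strongly connected component of $\mathrm{dec}(G)$ from which no edge leads to a different strongly connected component. *)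

theory Defs
  imports Main
begin

datatype 'u event = Ins 'u | Del 'u

fun elem :: "'u event \<Rightarrow> 'u" where
  "elem (Ins a) = a"
| "elem (Del a) = a"

definition adj :: "'v set set \<Rightarrow> ('v \<times> 'v) set" where
  "adj E = {(u, v). {u, v} \<in> E}"

definition univ_V :: "'v set \<Rightarrow> ('v \<Rightarrow> 'u event) \<Rightarrow> 'u set" where
  "univ_V V lab = elem ` lab ` V"

definition event_graph :: "'v set \<Rightarrow> 'v set set \<Rightarrow> ('v \<Rightarrow> 'u event) \<Rightarrow> bool" where
  "event_graph V E lab \<longleftrightarrow>
     finite V \<and> V \<noteq> {} \<and>
     (\<forall>e\<in>E. \<exists>u v. u \<in> V \<and> v \<in> V \<and> u \<noteq> v \<and> e = {u, v}) \<and>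
     (\<forall>u\<in>V. \<forall>v\<in>V. (u, v) \<in> (adj E)\<^sup>*) \<and>
     (\<forall>y\<in>univ_V V lab. (\<exists>v\<in>V. lab v = Ins y) \<and> (\<exists>v\<in>V. lab v = Del y))"

fun apply_event :: "'u event \<Rightarrow> 'u set \<Rightarrow> 'u set" where
  "apply_event (Ins a) X = insert a X"
| "apply_event (Del a) X = X - {a}"

definition dec_vertices :: "'v set \<Rightarrow> ('v \<Rightarrow> 'u event) \<Rightarrow> ('v \<times> 'u set) set" where
  "dec_vertices V lab = V \<times> Pow (univ_V V lab)"

definition dec_edges :: "'v set \<Rightarrow> 'v set set \<Rightarrow> ('v \<Rightarrow> 'u event) \<Rightarrow> (('v \<times> 'u set) \<times> ('v \<times> 'u set)) set" where
  "dec_edges V E lab =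
     {((u, X), (v, Y)). (u, X) \<in> dec_vertices V lab \<and> (v, Y) \<in> dec_vertices V lab \<and>
        {u, v} \<in> E \<and> Y = apply_event (lab v) X}"

definition scc :: "'a set \<Rightarrow> ('a \<times> 'a) set \<Rightarrow> 'a set \<Rightarrow> bool" where
  "scc W R C \<longleftrightarrow> C \<noteq> {} \<and> C \<subseteq> W \<and>
     (\<forall>a\<in>C. \<forall>b\<in>C. (a, b) \<in> R\<^sup>* ) \<and>
     (\<forall>a\<in>C. \<forall>b\<in>W. (a, b) \<in> R\<^sup>* \<and> (b, a) \<in> R\<^sup>* \<longrightarrow> b \<in> C)"

definition sink_component :: "'a set \<Rightarrow> ('a \<times> 'a) set \<Rightarrow> 'a set \<Rightarrow> bool" where
  "sink_component W R C \<longleftrightarrow> scc W R C \<and> (\<forall>a\<in>C. \<forall>b. (a, b) \<in> R \<longrightarrow> b \<in> C)"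

definition reaches :: "('a \<times> 'a) set \<Rightarrow> 'a \<Rightarrow> 'a set \<Rightarrow> bool" where
  "reaches R a C \<longleftrightarrow> (\<exists>c\<in>C. (a, c) \<in> R\<^sup>* )"

end

theory Submission
  imports Defs "HOL-Library.Transitive_Closure_Table"
begin

(* A digraph (W, R) with R \<subseteq> W \<times> W in which some vertex z is reachable
   from every vertex has exactly one sink component, namely the set of vertices reachable
   from z; this sink is reached from every vertex.  So it suffices to find, in dec(G), a
   decorated vertex reachable from all others.
   Lifting a walk ws of G to dec(G) from state X ends in the state obtained by applying the
   labels of ws to X.  Every element touched by ws is overwritten, so if ws visits every node
   of G the final state no longer depends on X \<subseteq> U (the elements
   occurring in labels).  Because G is connected and has at
   least two nodes, such a covering walk exists from any node; prefixing it by a walk to its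
   start node drives every decorated vertex to one common decorated vertex z. *)

lemma rtrancl_closed:
  assumes "R \<subseteq> W \<times> W" "a \<in> W" "(a, b) \<in> R\<^sup>*"
  shows "b \<in> W"
  using assms(3,2) by (induction rule: rtrancl_induct) (use assms(1) in auto)

lemma reachable_from_target_is_sink:
  assumes RW: "R \<subseteq> W \<times> W" and z: "z \<in> W" and target: "\<forall>a\<in>W. (a, z) \<in> R\<^sup>*"
  shows "sink_component W R (R\<^sup>* `` {z})"
proof -
  have TW: "R\<^sup>* `` {z} \<subseteq> W" using rtrancl_closed[OF RW z] by blast
  have strong: "\<forall>a\<in>R\<^sup>* `` {z}. \<forall>b\<in>R\<^sup>* `` {z}. (a, b) \<in> R\<^sup>*"
  proof (intro ballI)
    fix a b assume "a \<in> R\<^sup>* `` {z}" "b \<in> R\<^sup>* `` {z}"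
    then have "(a, z) \<in> R\<^sup>*" "(z, b) \<in> R\<^sup>*" using TW target by blast+
    then show "(a, b) \<in> R\<^sup>*" by (rule rtrancl_trans)
  qed
  have maximal: "\<forall>a\<in>R\<^sup>* `` {z}. \<forall>b. (a, b) \<in> R\<^sup>* \<longrightarrow> b \<in> R\<^sup>* `` {z}"
    by (auto intro: rtrancl_trans)
  show ?thesis
    unfolding sink_component_def scc_def
  proof (intro conjI)
    show "R\<^sup>* `` {z} \<noteq> {}" by blast
  qed (use TW strong maximal r_into_rtrancl in blast)+
qed

(* Conversely every sink component is closed under reachability and contains z,
   hence coincides with the vertices reachable from z. *)
lemma sink_is_reachable_from_target:
  assumes target: "\<forall>a\<in>W. (a, z) \<in> R\<^sup>*" and C: "sink_component W R C"
  shows "C = R\<^sup>* `` {z}"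
proof -
  have "R `` C \<subseteq> C" using C unfolding sink_component_def by blast
  then have closed: "R\<^sup>* `` C = C" by (rule Image_closed_trancl)
  obtain c where c: "c \<in> C" "c \<in> W" using C unfolding sink_component_def scc_def by blast
  then have "z \<in> R\<^sup>* `` C" using target by blast
  then have "z \<in> C" using closed by simp
  have strong: "\<forall>a\<in>C. \<forall>b\<in>C. (a, b) \<in> R\<^sup>*" using C unfolding sink_component_def scc_def by blast
  show ?thesis
  proof
    show "C \<subseteq> R\<^sup>* `` {z}" using strong \<open>z \<in> C\<close> by blast
    have "R\<^sup>* `` {z} \<subseteq> R\<^sup>* `` C" using \<open>z \<in> C\<close> by blast
    then show "R\<^sup>* `` {z} \<subseteq> C" using closed by simp
  qed
qed

definition run :: "('v \<Rightarrow> 'u event) \<Rightarrow> 'u set \<Rightarrow> 'v list \<Rightarrow> 'u set" where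
  "run lab X ws = fold (\<lambda>v Y. apply_event (lab v) Y) ws X"

lemma run_Nil [simp]: "run lab X [] = X"
  by (simp add: run_def)

lemma run_Cons [simp]: "run lab X (v # ws) = run lab (apply_event (lab v) X) ws"
  by (simp add: run_def)

lemma run_split: "run lab X ws = (X - elem ` lab ` set ws) \<union> run lab {} ws"
proof (induction ws arbitrary: X)
  case Nil
  then show ?case by simp
next
  case (Cons v ws)
  show ?case
  proof (cases "lab v")
    case (Ins e)
    then show ?thesis using Cons.IH[of "insert e X"] Cons.IH[of "{e}"] by auto
  next
    case (Del e)
    then show ?thesis using Cons.IH[of "X - {e}"] Cons.IH[of "{}"] by auto
  qed
qed

lemma run_forgets_touched_state:
  assumes "X \<subseteq> elem ` lab ` set ws"
  shows "run lab X ws = run lab {} ws"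
  using assms run_split[of lab X ws] by blast

(* Walks of G, given by the list of visited nodes after the start node. *)
abbreviation walk :: "'v set set \<Rightarrow> 'v \<Rightarrow> 'v list \<Rightarrow> 'v \<Rightarrow> bool" where
  "walk E \<equiv> rtrancl_path (\<lambda>u v. (u, v) \<in> adj E)"

lemma walk_iff_rtrancl: "(u, w) \<in> (adj E)\<^sup>* \<longleftrightarrow> (\<exists>ws. walk E u ws w)"
  unfolding rtranclp_eq_rtrancl_path[symmetric] rtranclp_rtrancl_eq by simp

lemma adj_sym: "(u, v) \<in> adj E \<Longrightarrow> (v, u) \<in> adj E"
  by (simp add: adj_def insert_commute)

lemma adj_in_V:
  assumes "event_graph V E lab" "(u, v) \<in> adj E"
  shows "v \<in> V"
  using assms by (auto simp: event_graph_def adj_def doubleton_eq_iff)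

lemma dec_edges_in_vertices: "dec_edges V E lab \<subseteq> dec_vertices V lab \<times> dec_vertices V lab"
  by (auto simp: dec_edges_def)

lemma walk_lifts:
  assumes G: "event_graph V E lab" and "walk E u ws w"
    and "(u, X) \<in> dec_vertices V lab"
  shows "((u, X), (w, run lab X ws)) \<in> (dec_edges V E lab)\<^sup>*"
  using assms(2,3)
proof (induction arbitrary: X rule: rtrancl_path.induct)
  case (base x)
  then show ?case by simp
next
  case (step u v vs w)
  let ?Y = "apply_event (lab v) X"
  have "v \<in> V" using adj_in_V[OF G step.hyps(1)] .
  then have "elem (lab v) \<in> univ_V V lab" by (simp add: univ_V_def)
  then have "(v, ?Y) \<in> dec_vertices V lab"
    using \<open>v \<in> V\<close> step.prems by (cases "lab v") (auto simp: dec_vertices_def)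
  then have "((u, X), (v, ?Y)) \<in> dec_edges V E lab"
    using step.hyps(1) step.prems by (auto simp: dec_edges_def adj_def)
  with step.IH[OF \<open>(v, ?Y) \<in> _\<close>] show ?case
    by (simp add: converse_rtrancl_into_rtrancl)
qed

lemma walk_visits_end: "rtrancl_path r a ps b \<Longrightarrow> a \<noteq> b \<Longrightarrow> b \<in> set ps"
  by (induction rule: rtrancl_path.induct) auto

(* Every node has a neighbour: each element has an insertion and a deletion node,
   so V has two distinct nodes, and G is connected. *)
lemma has_neighbour:
  assumes G: "event_graph V E lab" and a: "a \<in> V"
  obtains n where "(a, n) \<in> adj E"
proof -
  let ?y = "elem (lab a)"
  have "?y \<in> univ_V V lab" using a by (simp add: univ_V_def)
  then obtain p q where "p \<in> V" "lab p = Ins ?y" "q \<in> V" "lab q = Del ?y"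
    using G unfolding event_graph_def by blast
  then obtain b where b: "b \<in> V" "b \<noteq> a" by (metis event.distinct(1))
  then have "(a, b) \<in> (adj E)\<^sup>*" using G a by (auto simp: event_graph_def)
  with b(2) show ?thesis using that by (auto elim: converse_rtranclE)
qed

lemma walk_visiting:
  assumes G: "event_graph V E lab" and "a \<in> V" "b \<in> V"
  obtains ps where "walk E a ps b" "b \<in> set ps"
proof (cases "a = b")
  case True
  obtain n where "(a, n) \<in> adj E" using has_neighbour[OF G \<open>a \<in> V\<close>] .
  then have "walk E a [n, a] a" by (auto intro: rtrancl_path.intros adj_sym)
  then show ?thesis using that True by simp
next
  case False
  have "(a, b) \<in> (adj E)\<^sup>*" using G assms(2,3) by (auto simp: event_graph_def)
  then obtain ps where "walk E a ps b" by (auto simp: walk_iff_rtrancl)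
  with False show ?thesis using that walk_visits_end by metis
qed

lemma covering_walk:
  assumes G: "event_graph V E lab" and "w0 \<in> V" and "finite S" "S \<subseteq> V"
  shows "\<exists>ws w. walk E w0 ws w \<and> w \<in> V \<and> S \<subseteq> set ws"
  using assms(3,4)
proof (induction rule: finite_induct)
  case empty
  show ?case using \<open>w0 \<in> V\<close> rtrancl_path.base by fastforce
next
  case (insert x S)
  then obtain ws w where ws: "walk E w0 ws w" "w \<in> V" "S \<subseteq> set ws" by auto
  obtain ps where "walk E w ps x" "x \<in> set ps"
    using walk_visiting[OF G \<open>w \<in> V\<close>] insert.prems by blast
  then have "walk E w0 (ws @ ps) x" "insert x S \<subseteq> set (ws @ ps)"
    using ws by (auto intro: rtrancl_path_trans)
  then show ?case using insert.prems by blast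
qed

lemma dec_graph_universal_target:
  assumes G: "event_graph V E lab"
  obtains z where "z \<in> dec_vertices V lab"
    and "\<forall>a\<in>dec_vertices V lab. (a, z) \<in> (dec_edges V E lab)\<^sup>*"
proof -
  obtain w0 where w0: "w0 \<in> V" using G by (auto simp: event_graph_def)
  obtain ws w where ws: "walk E w0 ws w" "V \<subseteq> set ws"
    using covering_walk[OF G w0 _ order_refl] G by (auto simp: event_graph_def)
  define z where "z = (w, run lab {} ws)"
  have target: "(a, z) \<in> (dec_edges V E lab)\<^sup>*" if a: "a \<in> dec_vertices V lab" for a
  proof -
    obtain u X where uX: "a = (u, X)" "u \<in> V" using a by (auto simp: dec_vertices_def)
    have "(u, w0) \<in> (adj E)\<^sup>*" using G uX(2) w0 by (auto simp: event_graph_def)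
    then obtain ps where "walk E u ps w0" by (auto simp: walk_iff_rtrancl)
    define Y where "Y = run lab X ps"
    have to_w0: "(a, (w0, Y)) \<in> (dec_edges V E lab)\<^sup>*"
      using walk_lifts[OF G \<open>walk E u ps w0\<close>] a uX(1) by (simp add: Y_def)
    then have "(w0, Y) \<in> dec_vertices V lab"
      using rtrancl_closed[OF dec_edges_in_vertices a] by blast
    then have "Y \<subseteq> univ_V V lab" by (simp add: dec_vertices_def)
    also have "\<dots> \<subseteq> elem ` lab ` set ws" unfolding univ_V_def using ws(2) by (intro image_mono)
    finally have "Y \<subseteq> elem ` lab ` set ws" .
    then have "run lab Y ws = run lab {} ws" by (rule run_forgets_touched_state)
    then have "((w0, Y), z) \<in> (dec_edges V E lab)\<^sup>*"
      using walk_lifts[OF G ws(1) \<open>(w0, Y) \<in> _\<close>] by (simp add: z_def)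
    with to_w0 show ?thesis by (rule rtrancl_trans)
  qed
  have "(w0, {}) \<in> dec_vertices V lab" using w0 by (simp add: dec_vertices_def)
  then have "z \<in> dec_vertices V lab"
    using target rtrancl_closed[OF dec_edges_in_vertices] by blast
  with target show ?thesis using that by blast
qed

theorem mainTheorem2:
  fixes V :: "'v set" and E :: "'v set set" and lab :: "'v \<Rightarrow> 'u event"
  assumes "event_graph V E lab"
  shows "\<exists>!C. sink_component (dec_vertices V lab) (dec_edges V E lab) C \<and>
           (\<forall>v\<in>V. reaches (dec_edges V E lab) (v, {}) C \<and>
              (\<forall>C'. sink_component (dec_vertices V lab) (dec_edges V E lab) C' \<and>
                    reaches (dec_edges V E lab) (v, {}) C' \<longrightarrow> C' = C))"
proof -
  let ?W = "dec_vertices V lab" and ?R = "dec_edges V E lab"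
  obtain z where z: "z \<in> ?W" and target: "\<forall>a\<in>?W. (a, z) \<in> ?R\<^sup>*"
    using dec_graph_universal_target[OF assms] .
  let ?T = "?R\<^sup>* `` {z}"
  have sink: "sink_component ?W ?R ?T"
    using reachable_from_target_is_sink[OF dec_edges_in_vertices z target] .
  have unique: "C = ?T" if "sink_component ?W ?R C" for C
    using sink_is_reachable_from_target[OF target that] .
  have "reaches ?R (v, {}) ?T" if "v \<in> V" for v
    using that target by (auto simp: reaches_def dec_vertices_def)
  with sink unique show ?thesis by (intro ex1I[of _ ?T]) blast+
qed

end
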